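(* Let $G$ be a finite loopless graph (parallel edges allowed). The set $\mathrm{Short}(\mathcal{C}(G))$ consists of precisely the orientation covectors for $\mathcal{C}(G)$.
   Context: Fix a reference orientation $\mathcal{O}_0$ of $G=(V,E)$; $C_1(G;\mathbb{Z})$ is the free abelian group on $E$ (edges directed by $\mathcal{O}_0$), $E$ orthonormal; $\partial e=v-w$ for $e$ from $w$ to $v$, $\partial^*$ its adjoint; the cut lattice is $\mathcal{C}(G)=\mathrm{im}(\partial^* )\cap C_1(G;\mathbb{Z})$ (over $\mathbb{Q}$). For an orientation $\mathcal{O}$ of $G$, $\chi_{\mathcal{O}}\in C_1(G;\mathbb{Z})$ has $\langle\chi_{\mathcal{O}},e\rangle=1$ if $e$ has the same direction in $\mathcal{O}_0$ and $\mathcal{O}$, and $-1$ otherwise; its restriction to $\mathcal{C}(G)$, an element of $\mathcal{C}(G)^*$, is called an orientation covector. For an integral positive definite lattice $\Lambda$, $\Lambda^*=\{x\in\Lambda\otimes\mathbb{Q}:\langle x,y\rangle\in\mathbb{Z}\ \forall y\}$, $\mathrm{Char}(\Lambda)=\{\chi\in\Lambda^*:\langle\chi,y\rangle\equiv\langle y,y\rangle\pmod2\ \forall y\in\Lambda\}$, and $\mathrm{Short}(\Lambda)$ is the set of $\chi\in\mathrm{Char}(\Lambda)$ of minimal norm in $\chi+2\Lambda$. *)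

theory Defs
  imports Complex_Main
begin

text \<open>A finite loopless multigraph: vertex set V, edge set E, and the reference
orientation O0 given by tail/head maps (edge e goes from tail e to head e).
Chains with rational coefficients are functions 'e => rat vanishing off E;
E is an orthonormal basis, so the inner product is the sum over E.\<close>

definition inner_E :: "'e set \<Rightarrow> ('e \<Rightarrow> rat) \<Rightarrow> ('e \<Rightarrow> rat) \<Rightarrow> rat" where
  "inner_E E x y = (\<Sum>e\<in>E. x e * y e)"

definition integral_chains :: "'e set \<Rightarrow> ('e \<Rightarrow> rat) set" where
  "integral_chains E = {x. (\<forall>e\<in>E. x e \<in> \<int>) \<and> (\<forall>e. e \<notin> E \<longrightarrow> x e = 0)}"

text \<open>Adjoint of the boundary map (over Q): since d e = head e - tail e,
  <d* f, e> = f (head e) - f (tail e).\<close>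
definition coboundary :: "'e set \<Rightarrow> ('e \<Rightarrow> 'v) \<Rightarrow> ('e \<Rightarrow> 'v) \<Rightarrow> ('v \<Rightarrow> rat) \<Rightarrow> ('e \<Rightarrow> rat)" where
  "coboundary E src tgt f = (\<lambda>e. if e \<in> E then f (tgt e) - f (src e) else 0)"

definition cut_lattice :: "'e set \<Rightarrow> ('e \<Rightarrow> 'v) \<Rightarrow> ('e \<Rightarrow> 'v) \<Rightarrow> ('e \<Rightarrow> rat) set" where
  "cut_lattice E src tgt = range (coboundary E src tgt) \<inter> integral_chains E"

text \<open>Lattice tensor Q: the rational span of L.\<close>
definition qspan :: "('e \<Rightarrow> rat) set \<Rightarrow> ('e \<Rightarrow> rat) set" where
  "qspan L = {x. \<exists>S c. finite S \<and> S \<subseteq> L \<and> x = (\<lambda>e. \<Sum>y\<in>S. c y * y e)}"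

definition dual_lattice :: "'e set \<Rightarrow> ('e \<Rightarrow> rat) set \<Rightarrow> ('e \<Rightarrow> rat) set" where
  "dual_lattice E L = {x \<in> qspan L. \<forall>y\<in>L. inner_E E x y \<in> \<int>}"

definition Char :: "'e set \<Rightarrow> ('e \<Rightarrow> rat) set \<Rightarrow> ('e \<Rightarrow> rat) set" where
  "Char E L = {\<chi> \<in> dual_lattice E L.
     \<forall>y\<in>L. \<exists>k::int. inner_E E \<chi> y - inner_E E y y = 2 * of_int k}"

definition Short :: "'e set \<Rightarrow> ('e \<Rightarrow> rat) set \<Rightarrow> ('e \<Rightarrow> rat) set" where
  "Short E L = {\<chi> \<in> Char E L.
     \<forall>y\<in>L. inner_E E \<chi> \<chi> \<le> inner_E E (\<lambda>e. \<chi> e + 2 * y e) (\<lambda>e. \<chi> e + 2 * y e)}"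

definition is_orientation :: "'e set \<Rightarrow> ('e \<Rightarrow> 'v) \<Rightarrow> ('e \<Rightarrow> 'v) \<Rightarrow> ('e \<Rightarrow> 'v \<times> 'v) \<Rightarrow> bool" where
  "is_orientation E src tgt Or \<longleftrightarrow> (\<forall>e\<in>E. Or e = (src e, tgt e) \<or> Or e = (tgt e, src e))"

definition chi_orient :: "'e set \<Rightarrow> ('e \<Rightarrow> 'v) \<Rightarrow> ('e \<Rightarrow> 'v) \<Rightarrow> ('e \<Rightarrow> 'v \<times> 'v) \<Rightarrow> ('e \<Rightarrow> rat)" where
  "chi_orient E src tgt Or = (\<lambda>e. if e \<in> E then (if Or e = (src e, tgt e) then 1 else -1) else 0)"

text \<open>Orientation covectors: the restriction of chi_O to L, viewed as an element of the
dual lattice via the (nondegenerate) pairing on L tensor Q.\<close>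
definition orientation_covectors :: "'e set \<Rightarrow> ('e \<Rightarrow> 'v) \<Rightarrow> ('e \<Rightarrow> 'v) \<Rightarrow> ('e \<Rightarrow> rat) set \<Rightarrow> ('e \<Rightarrow> rat) set" where
  "orientation_covectors E src tgt L = {x \<in> dual_lattice E L. \<exists>Or. is_orientation E src tgt Or \<and>
      (\<forall>y\<in>L. inner_E E x y = inner_E E (chi_orient E src tgt Or) y)}"

end

theory Submission
  imports Defs
begin

text \<open>
An orientation covector pairs an integral chain \<open>y\<close> with \<open>\<Sum>\<^sub>e \<plusminus>y\<^sub>e\<close>, which is congruent to the
norm \<open>\<Sum>\<^sub>e y\<^sub>e\<^sup>2\<close> mod 2 and bounded below by minus the norm, since \<open>m\<^sup>2 \<plusminus> m\<close> is an even
nonnegative integer; so it is characteristic and short. Conversely, a short characteristic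
covector \<open>\<chi>\<close> is determined by its values on the vertex cuts, and for every orientation \<open>O\<close> these
differ from the values of \<open>\<chi>\<^sub>O\<close> by even integers summing to zero. If they are not all zero, take
a vertex \<open>u\<close> with positive difference and the set \<open>R\<close> of vertices reachable from \<open>u\<close>. No edge
leaves \<open>R\<close>, so \<open>\<chi>\<^sub>O\<close> pairs with the cut of \<open>R\<close> to its norm, and shortness of \<open>\<chi>\<close> tested against
that cut forces a vertex \<open>w \<in> R\<close> with negative difference. Reversing a path from \<open>u\<close> to \<open>w\<close>
lowers the total absolute difference by 2, so eventually all differences vanish.
\<close>

subsection \<open>Vertex cuts\<close>

definition vertex_cut :: "'e set \<Rightarrow> ('e \<Rightarrow> 'v) \<Rightarrow> ('e \<Rightarrow> 'v) \<Rightarrow> 'v \<Rightarrow> ('e \<Rightarrow> rat)" where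
  "vertex_cut E src tgt v = coboundary E src tgt (\<lambda>x. of_bool (x = v))"

text \<open>For the covector of an orientation this is the in-degree minus the out-degree at \<open>v\<close>.\<close>
definition excess :: "'e set \<Rightarrow> ('e \<Rightarrow> 'v) \<Rightarrow> ('e \<Rightarrow> 'v) \<Rightarrow> ('e \<Rightarrow> rat) \<Rightarrow> 'v \<Rightarrow> rat" where
  "excess E src tgt x v = inner_E E x (vertex_cut E src tgt v)"

lemma vertex_cut_in_cut_lattice: "vertex_cut E src tgt v \<in> cut_lattice E src tgt"
  unfolding cut_lattice_def integral_chains_def vertex_cut_def coboundary_def by auto

lemma inner_E_coboundary:
  assumes "finite V" "\<And>e. e \<in> E \<Longrightarrow> src e \<in> V \<and> tgt e \<in> V"
  shows "inner_E E x (coboundary E src tgt f) = (\<Sum>v\<in>V. f v * excess E src tgt x v)"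
proof -
  have vertex_sum: "(\<Sum>v\<in>V. f v * vertex_cut E src tgt v e) = coboundary E src tgt f e"
    if "e \<in> E" for e
  proof -
    have "(\<Sum>v\<in>V. f v * vertex_cut E src tgt v e)
        = (\<Sum>v\<in>V. (if tgt e = v then f v else 0) - (if src e = v then f v else 0))"
      by (rule sum.cong) (auto simp: vertex_cut_def coboundary_def that)
    also have "\<dots> = coboundary E src tgt f e"
      using assms(1) assms(2)[OF that] by (simp add: sum_subtractf coboundary_def that)
    finally show ?thesis .
  qed
  have "(\<Sum>v\<in>V. f v * excess E src tgt x v) = (\<Sum>e\<in>E. \<Sum>v\<in>V. x e * (f v * vertex_cut E src tgt v e))"
    unfolding excess_def inner_E_def
    by (simp add: sum_distrib_left algebra_simps sum.swap[where A = V])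
  also have "\<dots> = inner_E E x (coboundary E src tgt f)"
    unfolding inner_E_def by (simp add: vertex_sum flip: sum_distrib_left)
  finally show ?thesis by simp
qed

lemma sum_excess_eq_0:
  assumes "finite V" "\<And>e. e \<in> E \<Longrightarrow> src e \<in> V \<and> tgt e \<in> V"
  shows "(\<Sum>v\<in>V. excess E src tgt x v) = 0"
proof -
  have "coboundary E src tgt (\<lambda>_. 1) = (\<lambda>_. 0)"
    unfolding coboundary_def by auto
  moreover have "inner_E E x (coboundary E src tgt (\<lambda>_. 1)) = (\<Sum>v\<in>V. 1 * excess E src tgt x v)"
    by (rule inner_E_coboundary[OF assms])
  ultimately show ?thesis
    by (simp add: inner_E_def)
qed

lemma inner_E_cut_lattice_eqI:
  assumes "finite V" "\<And>e. e \<in> E \<Longrightarrow> src e \<in> V \<and> tgt e \<in> V"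
    and "\<And>v. v \<in> V \<Longrightarrow> excess E src tgt x v = excess E src tgt x' v"
    and "y \<in> cut_lattice E src tgt"
  shows "inner_E E x y = inner_E E x' y"
proof -
  obtain f where "y = coboundary E src tgt f"
    using assms(4) unfolding cut_lattice_def by auto
  then show ?thesis
    using assms(3) by (simp add: inner_E_coboundary[OF assms(1,2)])
qed

subsection \<open>Orientation covectors are short\<close>

lemma chi_orient_ofE:
  assumes "is_orientation E src tgt Or" "e \<in> E"
  obtains s :: int where "chi_orient E src tgt Or e = of_int s" "s = 1 \<or> s = -1"
proof -
  have "chi_orient E src tgt Or e = of_int 1 \<or> chi_orient E src tgt Or e = of_int (-1)"
    using assms unfolding chi_orient_def by auto
  then show ?thesis
    using that by blast
qed

lemma integral_chains_ofE:
  assumes "y \<in> integral_chains E" "e \<in> E"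
  obtains m :: int where "y e = of_int m"
proof -
  have "y e \<in> \<int>"
    using assms unfolding integral_chains_def by blast
  then show ?thesis
    using that by (rule Ints_cases)
qed

lemma int_sign_square_parity_nonneg:
  fixes s m :: int
  assumes "s = 1 \<or> s = -1"
  shows "even (s * m - m * m)" and "0 \<le> s * m + m * m"
proof -
  have "s * m - m * m = m * (s - m)" "s * m + m * m = m * (s + m)"
    by (simp_all add: algebra_simps)
  moreover have "even (m * (s - m))"
    using assms by auto
  moreover have "0 \<le> m * (s + m)"
    using assms unfolding zero_le_mult_iff by presburger
  ultimately show "even (s * m - m * m)" "0 \<le> s * m + m * m"
    by simp_all
qed

lemma chi_orient_parity:
  assumes "is_orientation E src tgt Or" "y \<in> integral_chains E"
  shows "\<exists>k::int. inner_E E (chi_orient E src tgt Or) y - inner_E E y y = 2 * of_int k"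
proof -
  have "\<exists>k::int. chi_orient E src tgt Or e * y e - y e * y e = 2 * of_int k" if e: "e \<in> E" for e
  proof -
    obtain s where s: "chi_orient E src tgt Or e = of_int s" "s = 1 \<or> s = -1"
      using chi_orient_ofE[OF assms(1) e] .
    obtain m where m: "y e = of_int m"
      using integral_chains_ofE[OF assms(2) e] .
    obtain k where k: "s * m - m * m = 2 * k"
      using int_sign_square_parity_nonneg(1)[OF s(2)] by (rule evenE)
    have "(of_int (s * m - m * m) :: rat) = of_int (2 * k)"
      by (simp only: k)
    then have "chi_orient E src tgt Or e * y e - y e * y e = 2 * of_int k"
      using s(1) m by simp
    then show ?thesis ..
  qed
  then obtain k where k: "\<And>e. e \<in> E \<Longrightarrow> chi_orient E src tgt Or e * y e - y e * y e = 2 * of_int (k e)"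
    by metis
  have "inner_E E (chi_orient E src tgt Or) y - inner_E E y y
      = (\<Sum>e\<in>E. chi_orient E src tgt Or e * y e - y e * y e)"
    unfolding inner_E_def by (simp add: sum_subtractf)
  also have "\<dots> = (\<Sum>e\<in>E. 2 * of_int (k e))"
    by (rule sum.cong) (simp_all add: k)
  also have "\<dots> = 2 * of_int (\<Sum>e\<in>E. k e)"
    by (simp add: sum_distrib_left)
  finally show ?thesis ..
qed

lemma chi_orient_inner_nonneg:
  assumes "is_orientation E src tgt Or" "y \<in> integral_chains E"
  shows "0 \<le> inner_E E (chi_orient E src tgt Or) y + inner_E E y y"
  unfolding inner_E_def sum.distrib[symmetric]
proof (rule sum_nonneg)
  fix e assume e: "e \<in> E"
  obtain s where s: "chi_orient E src tgt Or e = of_int s" "s = 1 \<or> s = -1"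
    using chi_orient_ofE[OF assms(1) e] .
  obtain m where m: "y e = of_int m"
    using integral_chains_ofE[OF assms(2) e] .
  have "(0 :: rat) \<le> of_int (s * m + m * m)"
    using int_sign_square_parity_nonneg(2)[OF s(2)] by (simp only: of_int_0_le_iff)
  then show "0 \<le> chi_orient E src tgt Or e * y e + y e * y e"
    using s(1) m by simp
qed

lemma inner_E_add_double_self:
  "inner_E E (\<lambda>e. a e + 2 * b e) (\<lambda>e. a e + 2 * b e)
     = inner_E E a a + 4 * (inner_E E a b + inner_E E b b)"
  unfolding inner_E_def by (simp add: algebra_simps sum.distrib sum_distrib_left)

lemma orientation_covectors_subset_Short:
  "orientation_covectors E src tgt (cut_lattice E src tgt) \<subseteq> Short E (cut_lattice E src tgt)"
proof
  fix x assume "x \<in> orientation_covectors E src tgt (cut_lattice E src tgt)"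
  then obtain Or where dual: "x \<in> dual_lattice E (cut_lattice E src tgt)"
    and o: "is_orientation E src tgt Or"
    and same: "\<And>y. y \<in> cut_lattice E src tgt \<Longrightarrow> inner_E E x y = inner_E E (chi_orient E src tgt Or) y"
    unfolding orientation_covectors_def by blast
  have integral: "y \<in> integral_chains E" if "y \<in> cut_lattice E src tgt" for y
    using that unfolding cut_lattice_def by blast
  have "x \<in> Char E (cut_lattice E src tgt)"
    unfolding Char_def using dual same chi_orient_parity[OF o integral] by auto
  moreover have "inner_E E x x \<le> inner_E E (\<lambda>e. x e + 2 * y e) (\<lambda>e. x e + 2 * y e)"
    if "y \<in> cut_lattice E src tgt" for y
    using chi_orient_inner_nonneg[OF o integral[OF that]] same[OF that]
    by (simp add: inner_E_add_double_self)
  ultimately show "x \<in> Short E (cut_lattice E src tgt)"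
    unfolding Short_def by blast
qed

subsection \<open>Reversing edges and paths\<close>

lemma inner_E_fun_upd:
  assumes "finite E" "e \<in> E"
  shows "inner_E E (f(e := a)) y = inner_E E f y + (a - f e) * y e"
proof -
  have "inner_E E (f(e := a)) y = a * y e + (\<Sum>d\<in>E - {e}. f d * y d)"
    unfolding inner_E_def using assms by (simp add: sum.remove)
  also have "\<dots> = inner_E E f y + (a - f e) * y e"
    unfolding inner_E_def using assms by (simp add: sum.remove algebra_simps)
  finally show ?thesis .
qed

lemma excess_reverse_edge:
  assumes "finite E" "is_orientation E src tgt Or" "e \<in> E" "Or e = (a, b)" "src e \<noteq> tgt e"
  shows "is_orientation E src tgt (Or(e := (b, a)))"
    and "excess E src tgt (chi_orient E src tgt (Or(e := (b, a)))) v
       = excess E src tgt (chi_orient E src tgt Or) v + 2 * of_bool (v = a) - 2 * of_bool (v = b)"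
proof -
  have dir: "Or e = (src e, tgt e) \<or> Or e = (tgt e, src e)"
    using assms(2,3) unfolding is_orientation_def by auto
  then show "is_orientation E src tgt (Or(e := (b, a)))"
    using assms(2,4) unfolding is_orientation_def by auto
  have "chi_orient E src tgt (Or(e := (b, a)))
      = (chi_orient E src tgt Or)(e := - chi_orient E src tgt Or e)"
    using dir assms(3-5) unfolding chi_orient_def by (auto simp: fun_eq_iff)
  moreover have "chi_orient E src tgt Or e * vertex_cut E src tgt v e = of_bool (v = b) - of_bool (v = a)"
    using dir assms(3-5) unfolding chi_orient_def vertex_cut_def coboundary_def by auto
  ultimately show "excess E src tgt (chi_orient E src tgt (Or(e := (b, a)))) v
       = excess E src tgt (chi_orient E src tgt Or) v + 2 * of_bool (v = a) - 2 * of_bool (v = b)"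
    unfolding excess_def by (simp add: inner_E_fun_upd[OF assms(1,3)] algebra_simps)
qed

fun walk :: "'e set \<Rightarrow> ('e \<Rightarrow> 'v \<times> 'v) \<Rightarrow> 'v \<Rightarrow> 'e list \<Rightarrow> 'v \<Rightarrow> bool" where
  "walk E Or u [] w \<longleftrightarrow> u = w"
| "walk E Or u (e # es) w \<longleftrightarrow> e \<in> E \<and> fst (Or e) = u \<and> walk E Or (snd (Or e)) es w"

lemma walk_snoc:
  "walk E Or u es x \<Longrightarrow> e \<in> E \<Longrightarrow> fst (Or e) = x \<Longrightarrow> walk E Or u (es @ [e]) (snd (Or e))"
  by (induction es arbitrary: u) auto

lemma walk_append_split:
  "walk E Or u (xs @ ys) w \<Longrightarrow> \<exists>m. walk E Or u xs m \<and> walk E Or m ys w"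
  by (induction xs arbitrary: u) auto

text \<open>The last conclusion is only there to make the induction go through: when the first edge
of the walk is not used again, the rest of the walk can be reversed first without touching it.
A repeated first edge is removed by short-cutting the walk to its last occurrence.\<close>
lemma excess_reverse_walk:
  assumes "finite E" "\<And>e. e \<in> E \<Longrightarrow> src e \<noteq> tgt e"
    and "is_orientation E src tgt Or" "walk E Or u es w"
  shows "\<exists>Or'. is_orientation E src tgt Or' \<and>
    (\<forall>v. excess E src tgt (chi_orient E src tgt Or') v
       = excess E src tgt (chi_orient E src tgt Or) v + 2 * of_bool (v = u) - 2 * of_bool (v = w))
    \<and> (\<forall>d. d \<notin> set es \<longrightarrow> Or' d = Or d)"
  using assms(4)
proof (induction "length es" arbitrary: u es rule: less_induct)
  case less
  show ?case
  proof (cases es)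
    case Nil
    then show ?thesis using less.prems by (intro exI[of _ Or]) (auto simp: assms(3))
  next
    case (Cons e es')
    have e: "e \<in> E" "fst (Or e) = u" and rest: "walk E Or (snd (Or e)) es' w"
      using less.prems Cons by auto
    show ?thesis
    proof (cases "e \<in> set es'")
      case True
      then obtain xs ys where xy: "es' = xs @ e # ys"
        by (meson split_list)
      then have "walk E Or u (e # ys) w"
        using walk_append_split[of E Or _ xs "e # ys" w] rest e(2) by auto
      moreover have "length (e # ys) < length es" "set (e # ys) \<subseteq> set es"
        using Cons xy by auto
      ultimately show ?thesis
        using less.hyps by blast
    next
      case False
      obtain Or1 where o1: "is_orientation E src tgt Or1"
        and ex1: "\<forall>v. excess E src tgt (chi_orient E src tgt Or1) v
           = excess E src tgt (chi_orient E src tgt Or) v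
             + 2 * of_bool (v = snd (Or e)) - 2 * of_bool (v = w)"
        and same1: "\<forall>d. d \<notin> set es' \<longrightarrow> Or1 d = Or d"
        using less.hyps[of es' "snd (Or e)"] rest Cons by auto
      have "Or1 e = (u, snd (Or e))"
        using same1 False e(2) by (metis prod.collapse)
      note rev = excess_reverse_edge[OF assms(1) o1 e(1) this assms(2)[OF e(1)]]
      show ?thesis
        using rev ex1 same1 Cons by (intro exI[of _ "Or1(e := (snd (Or e), u))"]) auto
    qed
  qed
qed

lemma chi_orient_inner_closed_cut:
  assumes "is_orientation E src tgt Or"
    and "\<And>e. e \<in> E \<Longrightarrow> fst (Or e) \<in> R \<Longrightarrow> snd (Or e) \<in> R"
  defines "c \<equiv> coboundary E src tgt (\<lambda>x. of_bool (x \<in> R))"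
  shows "inner_E E (chi_orient E src tgt Or) c = inner_E E c c"
  unfolding inner_E_def
proof (rule sum.cong)
  fix e assume e: "e \<in> E"
  then have "Or e = (src e, tgt e) \<or> Or e = (tgt e, src e)"
    using assms(1) unfolding is_orientation_def by auto
  then show "chi_orient E src tgt Or e * c e = c e * c e"
    using assms(2)[OF e] e unfolding chi_orient_def c_def coboundary_def
    by (cases "src e = tgt e") auto
qed simp

subsection \<open>Descent for a short characteristic covector\<close>

lemma sum_abs_shift_decrease:
  fixes d d' :: "'a \<Rightarrow> 'b::linordered_idom"
  assumes "finite V" "u \<in> V"
    and "\<And>v. d' v = d v - 2 * of_bool (v = u) + 2 * of_bool (v = w)"
    and "2 \<le> d u" "d w \<le> -2"
  shows "(\<Sum>v\<in>V. \<bar>d' v\<bar>) + 2 \<le> (\<Sum>v\<in>V. \<bar>d v\<bar>)"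
proof -
  have "u \<noteq> w"
    using assms(4,5) by auto
  then have "\<bar>d' v\<bar> + (if v = u then 2 else 0) \<le> \<bar>d v\<bar>" for v
    using assms(3)[of v] assms(4,5) by (cases "v = u"; cases "v = w") auto
  then have "(\<Sum>v\<in>V. \<bar>d' v\<bar> + (if v = u then 2 else 0)) \<le> (\<Sum>v\<in>V. \<bar>d v\<bar>)"
    by (rule sum_mono)
  then show ?thesis
    using assms(1,2) by (simp add: sum.distrib)
qed

context
  fixes V :: "'v set" and E :: "'e set" and src tgt :: "'e \<Rightarrow> 'v" and \<chi> :: "'e \<Rightarrow> rat"
  assumes finV: "finite V" and finE: "finite E"
    and inV: "\<And>e. e \<in> E \<Longrightarrow> src e \<in> V \<and> tgt e \<in> V"
    and loopless: "\<And>e. e \<in> E \<Longrightarrow> src e \<noteq> tgt e"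
    and short: "\<chi> \<in> Short E (cut_lattice E src tgt)"
begin

definition defect :: "('e \<Rightarrow> 'v \<times> 'v) \<Rightarrow> 'v \<Rightarrow> rat" where
  "defect Or v = excess E src tgt \<chi> v - excess E src tgt (chi_orient E src tgt Or) v"

definition total_defect :: "('e \<Rightarrow> 'v \<times> 'v) \<Rightarrow> rat" where
  "total_defect Or = (\<Sum>v\<in>V. \<bar>defect Or v\<bar>)"

lemma defect_even:
  assumes "is_orientation E src tgt Or"
  shows "\<exists>k::int. defect Or v = 2 * of_int k"
proof -
  let ?d = "vertex_cut E src tgt v"
  have "\<chi> \<in> Char E (cut_lattice E src tgt)"
    using short unfolding Short_def by simp
  then have "\<forall>y\<in>cut_lattice E src tgt. \<exists>k::int. inner_E E \<chi> y - inner_E E y y = 2 * of_int k"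
    unfolding Char_def by simp
  then have "\<exists>k::int. inner_E E \<chi> ?d - inner_E E ?d ?d = 2 * of_int k"
    using vertex_cut_in_cut_lattice by (rule bspec)
  then obtain k1 :: int where k1: "inner_E E \<chi> ?d - inner_E E ?d ?d = 2 * of_int k1" ..
  have "?d \<in> integral_chains E"
    using vertex_cut_in_cut_lattice[of E src tgt v] unfolding cut_lattice_def by blast
  then obtain k2 :: int
    where k2: "inner_E E (chi_orient E src tgt Or) ?d - inner_E E ?d ?d = 2 * of_int k2"
    using chi_orient_parity[OF assms] by blast
  have "defect Or v = 2 * of_int k1 - 2 * of_int k2"
    using k1 k2 unfolding defect_def excess_def by linarith
  then have "defect Or v = 2 * of_int (k1 - k2)"
    by simp
  then show ?thesis ..
qed

lemma exists_positive_defect: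
  assumes "\<exists>v\<in>V. defect Or v \<noteq> 0"
  shows "\<exists>u\<in>V. defect Or u > 0"
proof (rule ccontr)
  assume "\<not> ?thesis"
  then have "\<forall>v\<in>V. 0 \<le> - defect Or v"
    by force
  moreover have "(\<Sum>v\<in>V. - defect Or v) = 0"
    unfolding defect_def by (simp add: sum_subtractf sum_excess_eq_0[of V E src tgt, OF finV inV])
  ultimately have "\<forall>v\<in>V. defect Or v = 0"
    using sum_nonneg_eq_0_iff[OF finV, of "\<lambda>v. - defect Or v"] by simp
  then show False
    using assms by blast
qed

text \<open>Shortness of \<open>\<chi>\<close> is tested here against \<open>\<chi> - 2c\<close>, with \<open>c\<close> the cut of \<open>R\<close>.\<close>
lemma closed_set_defect_sum_nonpos:
  assumes o: "is_orientation E src tgt Or" and RV: "R \<subseteq> V"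
    and closed: "\<And>e. e \<in> E \<Longrightarrow> fst (Or e) \<in> R \<Longrightarrow> snd (Or e) \<in> R"
  shows "(\<Sum>v\<in>R. defect Or v) \<le> 0"
proof -
  define c where "c = coboundary E src tgt (\<lambda>x. of_bool (x \<in> R))"
  define y where "y = coboundary E src tgt (\<lambda>x. - of_bool (x \<in> R))"
  have "y \<in> cut_lattice E src tgt"
    unfolding y_def cut_lattice_def integral_chains_def coboundary_def by auto
  then have "inner_E E \<chi> \<chi> \<le> inner_E E (\<lambda>e. \<chi> e + 2 * y e) (\<lambda>e. \<chi> e + 2 * y e)"
    using short unfolding Short_def by blast
  then have "0 \<le> inner_E E \<chi> y + inner_E E y y"
    by (simp add: inner_E_add_double_self)
  moreover have "y = (\<lambda>e. - c e)"
    unfolding y_def c_def coboundary_def by auto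
  ultimately have "inner_E E \<chi> c \<le> inner_E E c c"
    by (simp add: inner_E_def sum_negf)
  also have "\<dots> = inner_E E (chi_orient E src tgt Or) c"
    unfolding c_def using chi_orient_inner_closed_cut[OF o closed] by simp
  finally have le: "inner_E E \<chi> c \<le> inner_E E (chi_orient E src tgt Or) c" .
  have pair: "inner_E E x c = (\<Sum>v\<in>R. excess E src tgt x v)" for x
  proof -
    have "inner_E E x c = (\<Sum>v\<in>V. of_bool (v \<in> R) * excess E src tgt x v)"
      unfolding c_def by (rule inner_E_coboundary[of V E src tgt, OF finV inV])
    also have "\<dots> = (\<Sum>v\<in>V \<inter> {v. v \<in> R}. excess E src tgt x v)"
      using finV by (rule sum_of_bool_mult_eq)
    also have "V \<inter> {v. v \<in> R} = R"
      using RV by blast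
    finally show ?thesis .
  qed
  show ?thesis
    using le unfolding pair defect_def by (simp add: sum_subtractf)
qed

lemma defect_reverse_walk:
  assumes "is_orientation E src tgt Or" "walk E Or u es w"
  obtains Or' where "is_orientation E src tgt Or'"
    "\<And>v. defect Or' v = defect Or v - 2 * of_bool (v = u) + 2 * of_bool (v = w)"
proof -
  obtain Or' where "is_orientation E src tgt Or'"
    and "\<forall>v. excess E src tgt (chi_orient E src tgt Or') v
       = excess E src tgt (chi_orient E src tgt Or) v + 2 * of_bool (v = u) - 2 * of_bool (v = w)"
    using excess_reverse_walk[of E src tgt Or u es w] finE loopless assms by blast
  then show ?thesis
    using that unfolding defect_def by simp
qed

lemma total_defect_decrease:
  assumes o: "is_orientation E src tgt Or" and "\<exists>v\<in>V. defect Or v \<noteq> 0"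
  shows "\<exists>Or'. is_orientation E src tgt Or' \<and> total_defect Or' + 2 \<le> total_defect Or"
proof -
  obtain u where uV: "u \<in> V" and u_pos: "defect Or u > 0"
    using exists_positive_defect[OF assms(2)] by blast
  define R where "R = {x \<in> V. \<exists>es. walk E Or u es x}"
  have RV: "R \<subseteq> V"
    unfolding R_def by blast
  have uR: "u \<in> R"
    unfolding R_def using uV walk.simps(1)[of E Or u u] by blast
  have "snd (Or e) \<in> R" if e: "e \<in> E" and "fst (Or e) \<in> R" for e
  proof -
    obtain es where "walk E Or u es (fst (Or e))"
      using \<open>fst (Or e) \<in> R\<close> unfolding R_def by blast
    from walk_snoc[OF this e refl] have "walk E Or u (es @ [e]) (snd (Or e))" .
    moreover have "snd (Or e) \<in> V"
      using o e inV unfolding is_orientation_def by (metis snd_conv)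
    ultimately show ?thesis
      unfolding R_def by blast
  qed
  from closed_set_defect_sum_nonpos[OF o RV this]
  have sum_R: "(\<Sum>v\<in>R. defect Or v) \<le> 0" .
  have "\<exists>w\<in>R. defect Or w < 0"
  proof (rule ccontr)
    assume "\<not> ?thesis"
    then have "0 < (\<Sum>v\<in>R. defect Or v)"
      by (intro sum_pos2[where f = "defect Or", OF finite_subset[OF RV finV] uR u_pos]) auto
    with sum_R show False
      by simp
  qed
  then obtain w where "w \<in> R" and w_neg: "defect Or w < 0" ..
  then obtain es where "walk E Or u es w"
    unfolding R_def by blast
  then obtain Or' where o': "is_orientation E src tgt Or'"
    and shift: "\<And>v. defect Or' v = defect Or v - 2 * of_bool (v = u) + 2 * of_bool (v = w)"
    using defect_reverse_walk[OF o] by blast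
  obtain k1 :: int where k1: "defect Or u = 2 * of_int k1"
    using defect_even[OF o] by blast
  obtain k2 :: int where k2: "defect Or w = 2 * of_int k2"
    using defect_even[OF o] by blast
  have "0 < k1" "k2 < 0"
    using u_pos w_neg k1 k2 by (simp_all add: zero_less_mult_iff mult_less_0_iff)
  then have "2 \<le> defect Or u" "defect Or w \<le> -2"
    using k1 k2 by simp_all
  then have "total_defect Or' + 2 \<le> total_defect Or"
    unfolding total_defect_def by (rule sum_abs_shift_decrease[OF finV uV shift])
  with o' show ?thesis
    by blast
qed

lemma exists_orientation_zero_defect:
  "\<exists>Or. is_orientation E src tgt Or \<and> (\<forall>v\<in>V. defect Or v = 0)"
proof -
  have "\<exists>Or'. is_orientation E src tgt Or' \<and> (\<forall>v\<in>V. defect Or' v = 0)"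
    if "is_orientation E src tgt Or" for Or
    using that
  proof (induction Or rule: measure_induct_rule[where f = "\<lambda>Or. nat \<lceil>total_defect Or\<rceil>"])
    case (less Or)
    show ?case
    proof (cases "\<forall>v\<in>V. defect Or v = 0")
      case True
      then show ?thesis using less.prems by blast
    next
      case False
      then obtain Or' where o': "is_orientation E src tgt Or'"
        and le: "total_defect Or' + 2 \<le> total_defect Or"
        using total_defect_decrease[OF less.prems] by blast
      have "0 \<le> total_defect Or'"
        unfolding total_defect_def by (simp add: sum_nonneg)
      then have "nat \<lceil>total_defect Or'\<rceil> < nat \<lceil>total_defect Or\<rceil>"
        using le by linarith
      then show ?thesis
        using less.IH o' by blast
    qed
  qed
  moreover have "is_orientation E src tgt (\<lambda>e. (src e, tgt e))"
    unfolding is_orientation_def by auto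
  ultimately show ?thesis by blast
qed

lemma Short_in_orientation_covectors:
  "\<chi> \<in> orientation_covectors E src tgt (cut_lattice E src tgt)"
proof -
  obtain Or where o: "is_orientation E src tgt Or" and zero: "\<forall>v\<in>V. defect Or v = 0"
    using exists_orientation_zero_defect by blast
  have "inner_E E \<chi> y = inner_E E (chi_orient E src tgt Or) y"
    if "y \<in> cut_lattice E src tgt" for y
    using zero that by (intro inner_E_cut_lattice_eqI[of V E src tgt, OF finV inV]) (simp_all add: defect_def)
  moreover have "\<chi> \<in> dual_lattice E (cut_lattice E src tgt)"
    using short unfolding Short_def Char_def by auto
  ultimately show ?thesis
    unfolding orientation_covectors_def using o by blast
qed

end

theorem proposition3p3:
  fixes V :: "'v set" and E :: "'e set" and src tgt :: "'e \<Rightarrow> 'v"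
  assumes "finite V" and "finite E"
    and "\<And>e. e \<in> E \<Longrightarrow> src e \<in> V \<and> tgt e \<in> V"
    and "\<And>e. e \<in> E \<Longrightarrow> src e \<noteq> tgt e"
  shows "Short E (cut_lattice E src tgt) = orientation_covectors E src tgt (cut_lattice E src tgt)"
proof (intro equalityI subsetI)
  fix \<chi> assume "\<chi> \<in> Short E (cut_lattice E src tgt)"
  with assms show "\<chi> \<in> orientation_covectors E src tgt (cut_lattice E src tgt)"
    by (rule Short_in_orientation_covectors)
next
  fix \<chi> assume "\<chi> \<in> orientation_covectors E src tgt (cut_lattice E src tgt)"
  then show "\<chi> \<in> Short E (cut_lattice E src tgt)"
    using orientation_covectors_subset_Short by blast
qed

end
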